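(* Suppose there exist constants $\epsilon,\kappa>0$ such that for all $\bm Z$ with $\mathrm{dist}(\bm Z,\mathcal W_G)\le\epsilon$ we have $\mathrm{dist}(\bm Z,\mathcal W_G)\le\kappa\|\nabla G(\bm Z)\|_F$. Then for all $\bm W$ with $\mathrm{dist}(\bm W,\mathcal W_F)\le\epsilon/\sqrt{\lambda_{\max}}$, $$\mathrm{dist}(\bm W,\mathcal W_F)\le\frac{\kappa\lambda}{\lambda_{\min}}\|\nabla F(\bm W)\|_F.$$
   Context: Let $L\ge2$, $d_0,\dots,d_L$ positive integers, $\bm Y\in\mathbb R^{d_L\times d_0}$, $\lambda_1,\dots,\lambda_L>0$, $\lambda=\prod_l\lambda_l$, $\lambda_{\min}=\min_l\lambda_l$, $\lambda_{\max}=\max_l\lambda_l$. For $\bm W=(\bm W_1,\dots,\bm W_L)$ with $\bm W_l\in\mathbb R^{d_l\times d_{l-1}}$: $F(\bm W)=\|\bm W_L\cdots\bm W_1-\bm Y\|_F^2+\sum_l\lambda_l\|\bm W_l\|_F^2$ and $G(\bm W)=\|\bm W_L\cdots\bm W_1-\sqrt\lambda\bm Y\|_F^2+\lambda\sum_l\|\bm W_l\|_F^2$; $\mathcal W_F$, $\mathcal W_G$ are the sets of critical points (zero gradient) of $F$, $G$. Distances and gradient norms use the Frobenius norm on tuples: $\mathrm{dist}(\bm W,\mathcal S)=\inf_{\bm V\in\mathcal S}(\sum_l\|\bm W_l-\bm V_l\|_F^2)^{1/2}$. *)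

theory Defs
  imports "HOL-Analysis.Analysis"
begin

text \<open>A tuple W = (W_1,...,W_L) with W_l a d_l x d_(l-1) real matrix is represented
  as a function W :: nat => nat => nat => real, where W l i j is entry (i,j) of W_l
  (0-based indices i < d l, j < d (l-1)); all entries outside the index set are 0.\<close>

type_synonym tup = "nat \<Rightarrow> nat \<Rightarrow> nat \<Rightarrow> real"

definition idx :: "nat \<Rightarrow> (nat \<Rightarrow> nat) \<Rightarrow> (nat \<times> nat \<times> nat) set" where
  "idx L d = {(l,i,j). 1 \<le> l \<and> l \<le> L \<and> i < d l \<and> j < d (l - 1)}"

definition valid :: "nat \<Rightarrow> (nat \<Rightarrow> nat) \<Rightarrow> tup \<Rightarrow> bool" where
  "valid L d W \<longleftrightarrow> (\<forall>l i j. (l,i,j) \<notin> idx L d \<longrightarrow> W l i j = 0)"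

fun mprod :: "(nat \<Rightarrow> nat) \<Rightarrow> tup \<Rightarrow> nat \<Rightarrow> nat \<Rightarrow> nat \<Rightarrow> real" where
  "mprod d W 0 i j = (if i = j \<and> i < d 0 then 1 else 0)"
| "mprod d W (Suc k) i j = (\<Sum>m<d k. W (Suc k) i m * mprod d W k m j)"

definition sqnorm :: "nat \<Rightarrow> (nat \<Rightarrow> nat) \<Rightarrow> nat \<Rightarrow> tup \<Rightarrow> real" where
  "sqnorm L d l W = (\<Sum>i<d l. \<Sum>j<d (l - 1). (W l i j)\<^sup>2)"

definition lossF :: "nat \<Rightarrow> (nat \<Rightarrow> nat) \<Rightarrow> (nat \<Rightarrow> nat \<Rightarrow> real) \<Rightarrow> (nat \<Rightarrow> real) \<Rightarrow> tup \<Rightarrow> real" where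
  "lossF L d Y lam W =
     (\<Sum>i<d L. \<Sum>j<d 0. (mprod d W L i j - Y i j)\<^sup>2) + (\<Sum>l=1..L. lam l * sqnorm L d l W)"

definition lossG :: "nat \<Rightarrow> (nat \<Rightarrow> nat) \<Rightarrow> (nat \<Rightarrow> nat \<Rightarrow> real) \<Rightarrow> (nat \<Rightarrow> real) \<Rightarrow> tup \<Rightarrow> real" where
  "lossG L d Y lam W =
     (let lm = (\<Prod>l=1..L. lam l) in
      (\<Sum>i<d L. \<Sum>j<d 0. (mprod d W L i j - sqrt lm * Y i j)\<^sup>2) + lm * (\<Sum>l=1..L. sqnorm L d l W))"

definition pdiff :: "(tup \<Rightarrow> real) \<Rightarrow> tup \<Rightarrow> nat \<Rightarrow> nat \<Rightarrow> nat \<Rightarrow> real" where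
  "pdiff f W l i j = deriv (\<lambda>t. f (\<lambda>a b c. W a b c + (if (a,b,c) = (l,i,j) then t else 0))) 0"

definition gradnorm :: "nat \<Rightarrow> (nat \<Rightarrow> nat) \<Rightarrow> (tup \<Rightarrow> real) \<Rightarrow> tup \<Rightarrow> real" where
  "gradnorm L d f W = sqrt (\<Sum>(l,i,j)\<in>idx L d. (pdiff f W l i j)\<^sup>2)"

definition crit :: "nat \<Rightarrow> (nat \<Rightarrow> nat) \<Rightarrow> (tup \<Rightarrow> real) \<Rightarrow> tup set" where
  "crit L d f = {W. valid L d W \<and> (\<forall>(l,i,j)\<in>idx L d. pdiff f W l i j = 0)}"

definition tdist :: "nat \<Rightarrow> (nat \<Rightarrow> nat) \<Rightarrow> tup \<Rightarrow> tup \<Rightarrow> real" where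
  "tdist L d W V = sqrt (\<Sum>(l,i,j)\<in>idx L d. (W l i j - V l i j)\<^sup>2)"

definition tdist_set :: "nat \<Rightarrow> (nat \<Rightarrow> nat) \<Rightarrow> tup \<Rightarrow> tup set \<Rightarrow> real" where
  "tdist_set L d W S = Inf (tdist L d W ` S)"

end

theory Submission
  imports Defs
begin

text \<open>Let D rescale layer l by \<open>sqrt \<lambda>\<^sub>l\<close>. The product of the layers of \<open>D W\<close> is
  \<open>sqrt \<lambda>\<close> times that of W, and the penalty \<open>\<lambda> \<parallel>(D W)\<^sub>l\<parallel>\<^sup>2\<close> of G equals
  \<open>\<lambda> \<lambda>\<^sub>l \<parallel>W\<^sub>l\<parallel>\<^sup>2\<close>, so \<open>G (D W) = \<lambda> F W\<close> for the linear bijection D. By the chain rule the partial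
  derivatives of F at W and of G at D W agree up to the factors \<open>\<lambda> / sqrt \<lambda>\<^sub>l\<close>, so D maps the
  critical points of F onto those of G. Since D stretches distances by a factor between
  \<open>sqrt \<lambda>\<^sub>m\<^sub>i\<^sub>n\<close> and \<open>sqrt \<lambda>\<^sub>m\<^sub>a\<^sub>x\<close>, the error bound for G at D W transfers to F at W.\<close>

definition layer_weight :: "nat \<Rightarrow> (nat \<Rightarrow> real) \<Rightarrow> nat \<Rightarrow> real" where
  "layer_weight L lam l = (if 1 \<le> l \<and> l \<le> L then sqrt (lam l) else 1)"

definition rescale :: "nat \<Rightarrow> (nat \<Rightarrow> real) \<Rightarrow> tup \<Rightarrow> tup" where
  "rescale L lam W = (\<lambda>l i j. layer_weight L lam l * W l i j)"

definition perturb :: "tup \<Rightarrow> nat \<Rightarrow> nat \<Rightarrow> nat \<Rightarrow> real \<Rightarrow> tup" where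
  "perturb W l i j t = (\<lambda>a b c. W a b c + (if (a,b,c) = (l,i,j) then t else 0))"

lemma pdiff_perturb: "pdiff f W l i j = deriv (\<lambda>t. f (perturb W l i j t)) 0"
  unfolding pdiff_def perturb_def by simp

lemma layer_weight_pos:
  assumes "\<forall>l\<in>{1..L}. lam l > 0"
  shows "layer_weight L lam l > 0"
  using assms by (auto simp: layer_weight_def)

lemma layer_weight_squared:
  assumes "lam l > 0" "l \<in> {1..L}"
  shows "(layer_weight L lam l)\<^sup>2 = lam l"
  using assms by (simp add: layer_weight_def)

lemma rescale_perturb:
  "rescale L lam (perturb W l i j t) = perturb (rescale L lam W) l i j (layer_weight L lam l * t)"
  unfolding rescale_def perturb_def by (auto simp: fun_eq_iff distrib_left)

lemma rescale_diff_squared: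
  assumes "lam l > 0" "l \<in> {1..L}"
  shows "(rescale L lam W l i j - rescale L lam V l i j)\<^sup>2 = lam l * (W l i j - V l i j)\<^sup>2"
proof -
  have "rescale L lam W l i j - rescale L lam V l i j = layer_weight L lam l * (W l i j - V l i j)"
    by (simp add: rescale_def algebra_simps)
  then show ?thesis using layer_weight_squared[of lam l L, OF assms] by (simp add: power_mult_distrib)
qed

lemma mprod_scale_layers:
  "mprod d (\<lambda>a b c. s a * W a b c) k i j = (\<Prod>a=1..k. s a) * mprod d W k i j"
  by (induction k arbitrary: i j)
    (simp_all add: sum_distrib_left mult.assoc mult.left_commute mult.commute)

lemma prod_sqrt: "(\<Prod>a\<in>A. sqrt (f a)) = sqrt (\<Prod>a\<in>A. f a)"
  by (induction A rule: infinite_finite_induct) (auto simp: real_sqrt_mult)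

lemma lossG_rescale:
  assumes lampos: "\<forall>l\<in>{1..L}. lam l > 0"
  shows "lossG L d Y lam (rescale L lam W) = (\<Prod>l=1..L. lam l) * lossF L d Y lam W"
proof -
  define lm where "lm = (\<Prod>l=1..L. lam l)"
  have "lm > 0" unfolding lm_def using lampos by (intro prod_pos) auto
  then have fit: "(sqrt lm * p - sqrt lm * y)\<^sup>2 = lm * (p - y)\<^sup>2" for p y
    by (simp add: power_mult_distrib right_diff_distrib[symmetric])
  have "(\<Prod>a=1..L. layer_weight L lam a) = sqrt lm"
    unfolding lm_def prod_sqrt[symmetric] by (intro prod.cong) (auto simp: layer_weight_def)
  then have product: "mprod d (rescale L lam W) L i j = sqrt lm * mprod d W L i j" for i j
    unfolding rescale_def mprod_scale_layers by simp
  have "sqnorm L d l (rescale L lam W) = lam l * sqnorm L d l W" if "l \<in> {1..L}" for l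
    using layer_weight_squared[of lam l L] that lampos
    by (simp add: sqnorm_def rescale_def power_mult_distrib sum_distrib_left)
  then have penalty: "(\<Sum>l=1..L. sqnorm L d l (rescale L lam W)) = (\<Sum>l=1..L. lam l * sqnorm L d l W)"
    by (rule sum.cong[OF refl])
  show ?thesis unfolding lossG_def lossF_def Let_def lm_def[symmetric] penalty
    by (simp add: product fit sum_distrib_left distrib_left mult.assoc cong: sum.cong)
qed

lemma mprod_differentiable:
  assumes "\<And>a b c. (\<lambda>t. f t a b c) differentiable at x"
  shows "(\<lambda>t. mprod d (f t) k i j) differentiable at x"
proof (induction k arbitrary: i j)
  case 0 then show ?case by simp
next
  case (Suc k)
  show ?case by (simp, intro differentiable_sum ballI differentiable_mult assms Suc, simp)
qed

lemma perturb_differentiable: "(\<lambda>t. perturb V l i j t a b c) differentiable at x"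
  by (cases "a = l \<and> b = i \<and> c = j") (auto simp: perturb_def)

lemma lossG_perturb_differentiable: "(\<lambda>t. lossG L d Y lam (perturb V l i j t)) differentiable at x"
proof -
  have "(\<lambda>t. mprod d (perturb V l i j t) k a b) differentiable at x" for k a b
    by (rule mprod_differentiable) (rule perturb_differentiable)
  moreover have "(\<lambda>t. sqnorm L d k (perturb V l i j t)) differentiable at x" for k
    unfolding sqnorm_def
    by (intro differentiable_sum ballI differentiable_power perturb_differentiable) auto
  ultimately show ?thesis unfolding lossG_def Let_def
    by (intro differentiable_add differentiable_sum ballI differentiable_power differentiable_diff
        differentiable_mult differentiable_const) auto
qed

lemma pdiff_lossG_rescale:
  assumes lampos: "\<forall>l\<in>{1..L}. lam l > 0"
  shows "pdiff (lossG L d Y lam) (rescale L lam W) l i j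
     = (\<Prod>l=1..L. lam l) / layer_weight L lam l * pdiff (lossF L d Y lam) W l i j"
proof -
  define lm where "lm = (\<Prod>l=1..L. lam l)"
  define c where "c = layer_weight L lam l"
  define h where "h = (\<lambda>u. lossG L d Y lam (perturb (rescale L lam W) l i j u))"
  have "lm > 0" unfolding lm_def using lampos by (intro prod_pos) auto
  have "c > 0" unfolding c_def using layer_weight_pos[OF lampos] .
  have "h (c * t) = lm * lossF L d Y lam (perturb W l i j t)" for t
    unfolding h_def c_def lm_def by (simp add: rescale_perturb[symmetric] lossG_rescale[OF lampos])
  then have lossF_perturb: "(\<lambda>t. lossF L d Y lam (perturb W l i j t)) = (\<lambda>t. h (c * t) / lm)"
    using \<open>lm > 0\<close> by (simp add: fun_eq_iff)
  have "DERIV h (c * 0) :> deriv h 0"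
    unfolding h_def by (simp add: DERIV_deriv_iff_real_differentiable lossG_perturb_differentiable)
  then have "DERIV (\<lambda>t. h (c * t) / lm) 0 :> deriv h 0 * c / lm"
    by (intro DERIV_cdivide DERIV_chain2[of h]) (auto intro!: derivative_eq_intros)
  then have "pdiff (lossF L d Y lam) W l i j = c / lm * deriv h 0"
    unfolding pdiff_perturb lossF_perturb by (simp add: DERIV_imp_deriv)
  moreover have "pdiff (lossG L d Y lam) (rescale L lam W) l i j = deriv h 0"
    unfolding h_def pdiff_perturb ..
  ultimately have "pdiff (lossG L d Y lam) (rescale L lam W) l i j
      = lm / c * pdiff (lossF L d Y lam) W l i j"
    using \<open>lm > 0\<close> \<open>c > 0\<close> by (simp add: field_simps)
  then show ?thesis unfolding lm_def c_def .
qed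

lemma mprod_perturb_zero:
  assumes "2 \<le> k"
  shows "mprod d (perturb (\<lambda>a b c. 0) l i j t) k a b = 0"
  using assms
proof (induction k arbitrary: a b rule: dec_induct)
  case base
  show ?case by (cases "l = 2") (auto simp: perturb_def numeral_2_eq_2)
next
  case (step k)
  then show ?case by simp
qed

text \<open>The zero tuple is needed as a witness that the critical set of F is nonempty, since
  \<open>tdist_set\<close> is an infimum and \<open>Inf {}\<close> carries no information.\<close>

lemma zero_in_crit_lossF:
  assumes "L \<ge> 2"
  shows "(\<lambda>a b c. 0) \<in> crit L d (lossF L d Y lam)"
proof -
  let ?P = "perturb (\<lambda>a b c. 0)"
  have entry: "DERIV (\<lambda>t. (?P l i j t a b c)\<^sup>2) 0 :> 0" for l i j a b c
    by (cases "a = l \<and> b = i \<and> c = j") (auto simp: perturb_def intro!: derivative_eq_intros)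
  have "DERIV (\<lambda>t. lossF L d Y lam (?P l i j t)) 0 :> 0" for l i j
  proof -
    have "lossF L d Y lam (?P l i j t) = (\<Sum>a<d L. \<Sum>b<d 0. (0 - Y a b)\<^sup>2)
        + (\<Sum>l'=1..L. lam l' * sqnorm L d l' (?P l i j t))" for t
      unfolding lossF_def using mprod_perturb_zero[OF assms] by simp
    moreover have "DERIV (\<lambda>t. (\<Sum>a<d L. \<Sum>b<d 0. (0 - Y a b)\<^sup>2)
        + (\<Sum>l'=1..L. lam l' * sqnorm L d l' (?P l i j t))) 0
        :> 0 + (\<Sum>l'=1..L. lam l' * (\<Sum>a<d l'. \<Sum>b<d (l' - 1). 0))"
      unfolding sqnorm_def by (intro DERIV_add DERIV_const DERIV_sum DERIV_cmult entry)
    ultimately show ?thesis by simp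
  qed
  then show ?thesis by (simp add: crit_def valid_def pdiff_perturb DERIV_imp_deriv)
qed

lemma crit_lossG_eq_rescale_crit_lossF:
  assumes lampos: "\<forall>l\<in>{1..L}. lam l > 0"
  shows "crit L d (lossG L d Y lam) = rescale L lam ` crit L d (lossF L d Y lam)"
proof -
  have weight: "layer_weight L lam l > 0" for l using layer_weight_pos[OF lampos] .
  have lm: "(\<Prod>l=1..L. lam l) > 0" using lampos by (intro prod_pos) auto
  have factor: "(\<Prod>l=1..L. lam l) / layer_weight L lam l \<noteq> 0" for l
    using divide_pos_pos[OF lm weight[of l]] by linarith
  have pdiff_zero_iff: "pdiff (lossG L d Y lam) (rescale L lam W) l i j = 0
      \<longleftrightarrow> pdiff (lossF L d Y lam) W l i j = 0" for W l i j
    by (simp only: pdiff_lossG_rescale[OF lampos] mult_eq_0_iff factor simp_thms)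
  have weight_nonzero: "layer_weight L lam l \<noteq> 0" for l using weight[of l] by simp
  then have valid_iff: "valid L d (rescale L lam W) \<longleftrightarrow> valid L d W" for W
    by (simp add: valid_def rescale_def)
  have "V = rescale L lam (\<lambda>l i j. V l i j / layer_weight L lam l)" for V
    using weight_nonzero by (simp add: rescale_def fun_eq_iff)
  then have "surj (rescale L lam)" by blast
  moreover have "crit L d (lossF L d Y lam) = rescale L lam -` crit L d (lossG L d Y lam)"
    unfolding crit_def by (auto simp: pdiff_zero_iff valid_iff)
  ultimately show ?thesis by (simp add: surj_image_vimage_eq)
qed

lemma sqrt_sum_le_sqrt_mult_sqrt_sum:
  fixes f g :: "'a \<Rightarrow> real"
  assumes "\<forall>x\<in>A. f x \<le> c * g x"
  shows "sqrt (\<Sum>x\<in>A. f x) \<le> sqrt c * sqrt (\<Sum>x\<in>A. g x)"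
proof -
  have "(\<Sum>x\<in>A. f x) \<le> c * (\<Sum>x\<in>A. g x)"
    unfolding sum_distrib_left using assms by (intro sum_mono) auto
  then show ?thesis unfolding real_sqrt_mult[symmetric] by (rule real_sqrt_le_mono)
qed

lemma tdist_rescale_le:
  assumes lampos: "\<forall>l\<in>{1..L}. lam l > 0" and M: "\<forall>l\<in>{1..L}. lam l \<le> M"
  shows "tdist L d (rescale L lam W) (rescale L lam V) \<le> sqrt M * tdist L d W V"
  unfolding tdist_def
proof (rule sqrt_sum_le_sqrt_mult_sqrt_sum, clarify)
  fix l i j assume "(l, i, j) \<in> idx L d"
  then have l: "l \<in> {1..L}" by (simp add: idx_def)
  show "(rescale L lam W l i j - rescale L lam V l i j)\<^sup>2 \<le> M * (W l i j - V l i j)\<^sup>2"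
    using rescale_diff_squared[OF _ l] lampos M l by (simp add: mult_right_mono)
qed

lemma tdist_le_tdist_rescale:
  assumes lampos: "\<forall>l\<in>{1..L}. lam l > 0" and m: "\<forall>l\<in>{1..L}. m \<le> lam l" and "m > 0"
  shows "tdist L d W V \<le> tdist L d (rescale L lam W) (rescale L lam V) / sqrt m"
proof -
  have "tdist L d W V \<le> sqrt (1 / m) * tdist L d (rescale L lam W) (rescale L lam V)"
    unfolding tdist_def
  proof (rule sqrt_sum_le_sqrt_mult_sqrt_sum, clarify)
    fix l i j assume "(l, i, j) \<in> idx L d"
    then have l: "l \<in> {1..L}" by (simp add: idx_def)
    have "m * (W l i j - V l i j)\<^sup>2 \<le> lam l * (W l i j - V l i j)\<^sup>2"
      using m l by (simp add: mult_right_mono)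
    then show "(W l i j - V l i j)\<^sup>2 \<le> 1 / m * (rescale L lam W l i j - rescale L lam V l i j)\<^sup>2"
      using rescale_diff_squared[OF _ l] lampos l \<open>m > 0\<close> by (simp add: field_simps)
  qed
  then show ?thesis by (simp add: real_sqrt_divide)
qed

lemma gradnorm_lossG_rescale_le:
  assumes lampos: "\<forall>l\<in>{1..L}. lam l > 0" and m: "\<forall>l\<in>{1..L}. m \<le> lam l" and "m > 0"
  shows "gradnorm L d (lossG L d Y lam) (rescale L lam W)
     \<le> (\<Prod>l=1..L. lam l) / sqrt m * gradnorm L d (lossF L d Y lam) W"
proof -
  define lm where "lm = (\<Prod>l=1..L. lam l)"
  have "lm > 0" unfolding lm_def using lampos by (intro prod_pos) auto
  have "gradnorm L d (lossG L d Y lam) (rescale L lam W)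
      \<le> sqrt (lm\<^sup>2 / m) * gradnorm L d (lossF L d Y lam) W"
    unfolding gradnorm_def
  proof (rule sqrt_sum_le_sqrt_mult_sqrt_sum, clarify)
    fix l i j assume "(l, i, j) \<in> idx L d"
    then have l: "l \<in> {1..L}" by (simp add: idx_def)
    define p where "p = pdiff (lossF L d Y lam) W l i j"
    have "lam l > 0" "m \<le> lam l" using l lampos m by auto
    have "(pdiff (lossG L d Y lam) (rescale L lam W) l i j)\<^sup>2 = lm\<^sup>2 / lam l * p\<^sup>2"
      using layer_weight_squared[of lam l L, OF \<open>lam l > 0\<close> l]
      by (simp add: pdiff_lossG_rescale[OF lampos] p_def lm_def power_mult_distrib power_divide)
    also have "\<dots> \<le> lm\<^sup>2 / m * p\<^sup>2"
      using \<open>m \<le> lam l\<close> \<open>m > 0\<close> by (intro mult_right_mono divide_left_mono) auto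
    finally show "(pdiff (lossG L d Y lam) (rescale L lam W) l i j)\<^sup>2
        \<le> lm\<^sup>2 / m * (pdiff (lossF L d Y lam) W l i j)\<^sup>2"
      unfolding p_def .
  qed
  then show ?thesis
    using \<open>lm > 0\<close> \<open>m > 0\<close> by (simp add: real_sqrt_divide lm_def)
qed

lemma cInf_image_le_mult_cInf_image:
  fixes f g :: "'a \<Rightarrow> real"
  assumes "S \<noteq> {}" "bdd_below (f ` S)" "c > 0" "\<forall>x\<in>S. f x \<le> c * g x"
  shows "Inf (f ` S) \<le> c * Inf (g ` S)"
proof -
  have "Inf (f ` S) / c \<le> Inf (g ` S)"
  proof (rule cInf_greatest)
    fix y assume "y \<in> g ` S"
    then obtain x where "x \<in> S" "y = g x" by auto
    then have "Inf (f ` S) \<le> c * y"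
      using assms(2,4) by (meson cInf_lower imageI order_trans)
    then show "Inf (f ` S) / c \<le> y" using \<open>c > 0\<close> by (simp add: divide_le_eq mult.commute)
  qed (use assms(1) in simp)
  then show ?thesis using \<open>c > 0\<close> by (simp add: divide_le_eq mult.commute)
qed

lemma tdist_nonneg: "tdist L d W V \<ge> 0"
  unfolding tdist_def by (auto intro!: sum_nonneg)

lemma tdist_set_crit_rescale:
  assumes "L \<ge> 2" and lampos: "\<forall>l\<in>{1..L}. lam l > 0"
    and m: "\<forall>l\<in>{1..L}. m \<le> lam l" "m > 0" and M: "\<forall>l\<in>{1..L}. lam l \<le> M"
  shows "tdist_set L d (rescale L lam W) (crit L d (lossG L d Y lam))
           \<le> sqrt M * tdist_set L d W (crit L d (lossF L d Y lam))"
    and "tdist_set L d W (crit L d (lossF L d Y lam))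
           \<le> 1 / sqrt m * tdist_set L d (rescale L lam W) (crit L d (lossG L d Y lam))"
proof -
  define S where "S = crit L d (lossF L d Y lam)"
  have "S \<noteq> {}" unfolding S_def using zero_in_crit_lossF[OF \<open>L \<ge> 2\<close>] by blast
  have M_pos: "M > 0" using m M \<open>L \<ge> 2\<close> by force
  have bdd: "bdd_below ((\<lambda>V. tdist L d X (f V)) ` S)" for X f
    using tdist_nonneg by (intro bdd_belowI[of _ 0]) auto
  have G: "tdist_set L d (rescale L lam W) (crit L d (lossG L d Y lam))
      = Inf ((\<lambda>V. tdist L d (rescale L lam W) (rescale L lam V)) ` S)"
    unfolding tdist_set_def S_def crit_lossG_eq_rescale_crit_lossF[OF lampos] image_image ..
  have F: "tdist_set L d W (crit L d (lossF L d Y lam)) = Inf ((\<lambda>V. tdist L d W V) ` S)"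
    unfolding tdist_set_def S_def ..
  show "tdist_set L d (rescale L lam W) (crit L d (lossG L d Y lam))
      \<le> sqrt M * tdist_set L d W (crit L d (lossF L d Y lam))"
    unfolding G F
    using \<open>S \<noteq> {}\<close> bdd[of _ "rescale L lam"] M_pos tdist_rescale_le[OF lampos M]
    by (intro cInf_image_le_mult_cInf_image) auto
  show "tdist_set L d W (crit L d (lossF L d Y lam))
      \<le> 1 / sqrt m * tdist_set L d (rescale L lam W) (crit L d (lossG L d Y lam))"
    unfolding G F
    using \<open>S \<noteq> {}\<close> bdd[of _ "\<lambda>V. V"] tdist_le_tdist_rescale[OF lampos m] \<open>m > 0\<close>
    by (intro cInf_image_le_mult_cInf_image) auto
qed

theorem lemma3p1:
  fixes L :: nat and d :: "nat \<Rightarrow> nat" and Y :: "nat \<Rightarrow> nat \<Rightarrow> real"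
    and lam :: "nat \<Rightarrow> real" and eps kappa :: real
  assumes L2: "L \<ge> 2"
    and dpos: "\<forall>l\<le>L. d l > 0"
    and lampos: "\<forall>l\<in>{1..L}. lam l > 0"
    and eps: "eps > 0" and kappa: "kappa > 0"
    and EB: "\<forall>Z. valid L d Z \<longrightarrow>
               tdist_set L d Z (crit L d (lossG L d Y lam)) \<le> eps \<longrightarrow>
               tdist_set L d Z (crit L d (lossG L d Y lam)) \<le> kappa * gradnorm L d (lossG L d Y lam) Z"
  shows "\<forall>W. valid L d W \<longrightarrow>
           tdist_set L d W (crit L d (lossF L d Y lam)) \<le> eps / sqrt (Max (lam ` {1..L})) \<longrightarrow>
           tdist_set L d W (crit L d (lossF L d Y lam))
             \<le> kappa * (\<Prod>l=1..L. lam l) / Min (lam ` {1..L}) * gradnorm L d (lossF L d Y lam) W"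
proof (intro allI impI)
  fix W assume "valid L d W"
  define M where "M = Max (lam ` {1..L})"
  define m where "m = Min (lam ` {1..L})"
  define dF where "dF = tdist_set L d W (crit L d (lossF L d Y lam))"
  define dG where "dG = tdist_set L d (rescale L lam W) (crit L d (lossG L d Y lam))"
  assume "dF \<le> eps / sqrt M"
  have M: "\<forall>l\<in>{1..L}. lam l \<le> M" and m: "\<forall>l\<in>{1..L}. m \<le> lam l" "m > 0"
    using lampos L2 by (auto simp: M_def m_def)
  have "sqrt M > 0" using M m L2 by force
  have "dG \<le> sqrt M * dF"
    unfolding dG_def dF_def by (rule tdist_set_crit_rescale(1)[OF L2 lampos m M])
  also have "\<dots> \<le> eps"
    using \<open>dF \<le> eps / sqrt M\<close> \<open>sqrt M > 0\<close> by (simp add: le_divide_eq mult.commute)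
  finally have "dG \<le> eps" .
  moreover have "valid L d (rescale L lam W)"
    using \<open>valid L d W\<close> by (simp add: valid_def rescale_def)
  ultimately have error_bound_G: "dG \<le> kappa * gradnorm L d (lossG L d Y lam) (rescale L lam W)"
    using EB unfolding dG_def by blast
  have "dF \<le> 1 / sqrt m * dG"
    unfolding dG_def dF_def by (rule tdist_set_crit_rescale(2)[OF L2 lampos m M])
  also have "\<dots> \<le> 1 / sqrt m * (kappa * gradnorm L d (lossG L d Y lam) (rescale L lam W))"
    using error_bound_G \<open>m > 0\<close> by (intro mult_left_mono) auto
  also have "\<dots> \<le> 1 / sqrt m * (kappa * ((\<Prod>l=1..L. lam l) / sqrt m * gradnorm L d (lossF L d Y lam) W))"
    using gradnorm_lossG_rescale_le[OF lampos m] kappa \<open>m > 0\<close> by (intro mult_left_mono) auto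
  also have "\<dots> = kappa * (\<Prod>l=1..L. lam l) / m * gradnorm L d (lossF L d Y lam) W"
    using \<open>m > 0\<close> by (simp add: field_simps)
  finally show "dF \<le> kappa * (\<Prod>l=1..L. lam l) / m * gradnorm L d (lossF L d Y lam) W" .
qed

end
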